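(* Let $Q$ be an inverse semigroup and let $b,c,u,v\in Q$ with $u\,\mathcal{R}\,v$. Then $bc^{-1}=u^{-1}v$ if and only if \[ub=vc,\qquad v\,\mathcal{R}\,vc,\qquad L_b\wedge L_c=L_{ub},\] where $\wedge$ is the meet in the semilattice $Q/\mathcal{L}$.
   Context: $a^{-1}$ denotes the unique inverse of $a$ in $Q$; $\mathcal{R},\mathcal{L}$ are Green's relations of $Q$ and $L_a$ the $\mathcal{L}$-class of $a$. The set $Q/\mathcal{L}$ is partially ordered by $L_a\leq L_b$ iff $Q^1a\subseteq Q^1b$; it is a meet semilattice, with $L_a\wedge L_b=L_c$ iff $c^{-1}c=a^{-1}ab^{-1}b$. *)

theory Defs
  imports Main
begin

definition is_inv :: "'a::semigroup_mult \<Rightarrow> 'a \<Rightarrow> bool" where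
  "is_inv a x \<longleftrightarrow> a * x * a = a \<and> x * a * x = x"

definition inverse_semigroup :: "'a::semigroup_mult itself \<Rightarrow> bool" where
  "inverse_semigroup _ \<longleftrightarrow> (\<forall>a::'a. \<exists>!x. is_inv a x)"

definition sinv :: "'a::semigroup_mult \<Rightarrow> 'a" where
  "sinv a = (THE x. is_inv a x)"

text \<open>Principal one-sided ideals Q^1 a and a Q^1.\<close>

definition lideal :: "'a::semigroup_mult \<Rightarrow> 'a set" where
  "lideal a = insert a (range (\<lambda>x. x * a))"

definition rideal :: "'a::semigroup_mult \<Rightarrow> 'a set" where
  "rideal a = insert a (range (\<lambda>x. a * x))"

definition greenL :: "'a::semigroup_mult \<Rightarrow> 'a \<Rightarrow> bool" where
  "greenL a b \<longleftrightarrow> lideal a = lideal b"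

definition greenR :: "'a::semigroup_mult \<Rightarrow> 'a \<Rightarrow> bool" where
  "greenR a b \<longleftrightarrow> rideal a = rideal b"

definition Lclass :: "'a::semigroup_mult \<Rightarrow> 'a set" where
  "Lclass a = {x. greenL x a}"

definition Lclass_le :: "'a::semigroup_mult set \<Rightarrow> 'a set \<Rightarrow> bool" where
  "Lclass_le X Y \<longleftrightarrow> (\<exists>a b. X = Lclass a \<and> Y = Lclass b \<and> lideal a \<subseteq> lideal b)"

definition Lmeet_is :: "'a::semigroup_mult set \<Rightarrow> 'a set \<Rightarrow> 'a set \<Rightarrow> bool" where
  "Lmeet_is X Y Z \<longleftrightarrow> Lclass_le Z X \<and> Lclass_le Z Y \<and>
     (\<forall>a. Lclass_le (Lclass a) X \<and> Lclass_le (Lclass a) Y \<longrightarrow> Lclass_le (Lclass a) Z)"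

end

(*
  In an inverse semigroup idempotents commute and (a b)^-1 = b^-1 a^-1. Hence u R v iff
  u u^-1 = v v^-1, so v R v c iff v c c^-1 = v; and L_a <= L_b iff a^-1 a <= b^-1 b in the
  semilattice of idempotents, so the meet condition reads (u b)^-1 u b = b^-1 b c^-1 c. From b c^-1 = u^-1 v and u u^-1 = v v^-1 one
  gets u^-1 u = b c^-1 c b^-1, hence u^-1 u b = b c^-1 c, which yields all three conditions.
  Conversely, the meet condition gives b c^-1 = u^-1 u b c^-1 = u^-1 v c c^-1 = u^-1 v.
*)

theory Submission
  imports Defs
begin

lemma rideal_mult_closed: "a \<in> rideal b \<Longrightarrow> a * x \<in> rideal b"
  by (auto simp: rideal_def mult.assoc)

lemma lideal_mult_closed: "a \<in> lideal b \<Longrightarrow> x * a \<in> lideal b"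
  by (auto simp: lideal_def simp flip: mult.assoc)

lemma rideal_subset_iff_mem: "rideal a \<subseteq> rideal b \<longleftrightarrow> a \<in> rideal b"
proof
  assume "a \<in> rideal b"
  then show "rideal a \<subseteq> rideal b"
    unfolding rideal_def[of a] by (auto intro: rideal_mult_closed)
qed (auto simp: rideal_def)

lemma lideal_subset_iff_mem: "lideal a \<subseteq> lideal b \<longleftrightarrow> a \<in> lideal b"
proof
  assume "a \<in> lideal b"
  then show "lideal a \<subseteq> lideal b"
    unfolding lideal_def[of a] by (auto intro: lideal_mult_closed)
qed (auto simp: lideal_def)

lemma Lclass_le_Lclass_iff: "Lclass_le (Lclass a) (Lclass b) \<longleftrightarrow> lideal a \<subseteq> lideal b"
proof
  assume "Lclass_le (Lclass a) (Lclass b)"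
  then obtain a' b' where "Lclass a = Lclass a'" "Lclass b = Lclass b'" "lideal a' \<subseteq> lideal b'"
    unfolding Lclass_le_def by blast
  moreover have "a \<in> Lclass a" "b \<in> Lclass b"
    unfolding Lclass_def greenL_def by simp_all
  ultimately show "lideal a \<subseteq> lideal b"
    unfolding Lclass_def greenL_def by auto
qed (auto simp: Lclass_le_def)

context
  assumes inverse_semigroup: "inverse_semigroup TYPE('a::semigroup_mult)"
begin

lemma sinv_is_inv: "is_inv (a::'a) (sinv a)"
  using inverse_semigroup theI' unfolding inverse_semigroup_def sinv_def by metis

lemma sinv_unique: "is_inv (a::'a) x \<Longrightarrow> sinv a = x"
  using inverse_semigroup sinv_is_inv unfolding inverse_semigroup_def by blast

lemma mult_sinv_mult [simp]: "(a::'a) * (sinv a * a) = a"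
  using sinv_is_inv[of a] by (simp add: is_inv_def mult.assoc)

lemma mult_sinv_mult_right [simp]: "(a::'a) * (sinv a * (a * x)) = a * x"
  by (metis mult_sinv_mult mult.assoc)

lemma sinv_mult_sinv [simp]: "sinv (a::'a) * (a * sinv a) = sinv a"
  using sinv_is_inv[of a] by (simp add: is_inv_def mult.assoc)

lemma sinv_mult_sinv_right [simp]: "sinv (a::'a) * (a * (sinv a * x)) = sinv a * x"
  by (metis sinv_mult_sinv mult.assoc)

lemma sinv_sinv [simp]: "sinv (sinv (a::'a)) = a"
  using sinv_is_inv[of a] by (intro sinv_unique) (simp add: is_inv_def)

lemma sinv_idem: "(e::'a) * e = e \<Longrightarrow> sinv e = e"
  by (intro sinv_unique) (simp add: is_inv_def)

lemma mult_sinv_idem: "(a::'a) * sinv a * (a * sinv a) = a * sinv a"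
  by (simp add: mult.assoc)

lemma sinv_mult_idem: "sinv (a::'a) * a * (sinv a * a) = sinv a * a"
  by (simp add: mult.assoc)

lemma idem_mult_idem:
  assumes e: "(e::'a) * e = e" and f: "f * f = f"
  shows "e * f * (e * f) = e * f"
proof -
  define x where "x = sinv (e * f)"
  have x: "is_inv (e * f) x"
    unfolding x_def by (rule sinv_is_inv)
  \<comment> \<open>\<open>f x e\<close> is another inverse of \<open>e f\<close>, so \<open>x = f x e\<close> and hence \<open>x\<close> is idempotent\<close>
  have "is_inv (e * f) (f * x * e)"
    using x e f unfolding is_inv_def by (metis mult.assoc)
  then have x_eq: "f * x * e = x"
    unfolding x_def by (rule sinv_unique[symmetric])
  have "x * x = f * (x * (e * f) * x) * e"
    by (subst (1 2) x_eq[symmetric]) (simp add: mult.assoc)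
  also have "\<dots> = x"
    using x x_eq unfolding is_inv_def by simp
  finally have x_idem: "x * x = x" .
  then have "sinv x = x"
    by (rule sinv_idem)
  then show ?thesis
    using x_idem unfolding x_def by (metis sinv_sinv)
qed

lemma idem_commute:
  assumes e: "(e::'a) * e = e" and f: "f * f = f"
  shows "e * f = f * e"
proof -
  have "is_inv (e * f) (f * e)"
    using idem_mult_idem[OF e f] idem_mult_idem[OF f e] e f
    unfolding is_inv_def by (metis mult.assoc)
  then have "f * e = sinv (e * f)"
    by (simp add: sinv_unique)
  also have "\<dots> = e * f"
    by (rule sinv_idem[OF idem_mult_idem[OF e f]])
  finally show ?thesis ..
qed

lemma sinv_mult_distrib: "sinv ((a::'a) * b) = sinv b * sinv a"
proof (rule sinv_unique)
  have comm: "b * sinv b * (sinv a * a) = sinv a * a * (b * sinv b)"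
    by (rule idem_commute[OF mult_sinv_idem sinv_mult_idem])
  have "a * b * (sinv b * sinv a) * (a * b) = a * (b * sinv b * (sinv a * a)) * b"
    by (simp add: mult.assoc)
  also have "\<dots> = a * b"
    unfolding comm by (simp add: mult.assoc)
  moreover have "sinv b * sinv a * (a * b) * (sinv b * sinv a)
      = sinv b * (sinv a * a * (b * sinv b)) * sinv a"
    by (simp add: mult.assoc)
  moreover have "\<dots> = sinv b * sinv a"
    unfolding comm[symmetric] by (simp add: mult.assoc)
  ultimately show "is_inv (a * b) (sinv b * sinv a)"
    unfolding is_inv_def by simp
qed

lemma rideal_subset_iff: "rideal (a::'a) \<subseteq> rideal b \<longleftrightarrow> b * sinv b * a = a"
proof -
  have "a \<in> rideal b \<longleftrightarrow> b * sinv b * a = a"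
    unfolding rideal_def by (auto simp: mult.assoc) (metis rangeI)
  then show ?thesis
    by (simp add: rideal_subset_iff_mem)
qed

lemma greenR_iff_mult_sinv_eq: "greenR (a::'a) b \<longleftrightarrow> a * sinv a = b * sinv b"
proof
  assume "greenR a b"
  then have "rideal a \<subseteq> rideal b" "rideal b \<subseteq> rideal a"
    unfolding greenR_def by simp_all
  then have "b * sinv b * a = a" "a * sinv a * b = b"
    by (simp_all add: rideal_subset_iff)
  then have "b * sinv b * (a * sinv a) = a * sinv a" "a * sinv a * (b * sinv b) = b * sinv b"
    by (metis mult.assoc)+
  then show "a * sinv a = b * sinv b"
    using idem_commute[OF mult_sinv_idem mult_sinv_idem, of a b] by simp
next
  assume R: "a * sinv a = b * sinv b"
  have "b * sinv b * a = a"
    unfolding R[symmetric] by (simp add: mult.assoc)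
  moreover have "a * sinv a * b = b"
    unfolding R by (simp add: mult.assoc)
  ultimately show "greenR a b"
    unfolding greenR_def by (intro subset_antisym) (simp_all add: rideal_subset_iff)
qed

lemma greenR_mult_right_iff: "greenR (a::'a) (a * x) \<longleftrightarrow> a * x * sinv x = a"
proof
  assume "greenR a (a * x)"
  then have R: "a * sinv a = a * x * sinv x * sinv a"
    by (simp add: greenR_iff_mult_sinv_eq sinv_mult_distrib mult.assoc)
  have "a = a * sinv a * a"
    by (simp add: mult.assoc)
  also have "\<dots> = a * (x * sinv x * (sinv a * a))"
    unfolding R by (simp add: mult.assoc)
  also have "\<dots> = a * (sinv a * a) * (x * sinv x)"
    unfolding idem_commute[OF mult_sinv_idem sinv_mult_idem] by (simp add: mult.assoc)
  finally show "a * x * sinv x = a"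
    by (simp add: mult.assoc)
next
  assume "a * x * sinv x = a"
  then show "greenR a (a * x)"
    by (simp add: greenR_iff_mult_sinv_eq sinv_mult_distrib flip: mult.assoc)
qed

lemma lideal_subset_iff: "lideal (a::'a) \<subseteq> lideal b \<longleftrightarrow> sinv a * a * (sinv b * b) = sinv a * a"
proof -
  have "a \<in> lideal b \<longleftrightarrow> a * (sinv b * b) = a"
    unfolding lideal_def by (auto simp: mult.assoc) (metis rangeI mult.assoc)
  also have "\<dots> \<longleftrightarrow> sinv a * a * (sinv b * b) = sinv a * a"
  proof
    show "sinv a * a * (sinv b * b) = sinv a * a" if "a * (sinv b * b) = a"
      using that by (metis mult.assoc)
    show "a * (sinv b * b) = a" if "sinv a * a * (sinv b * b) = sinv a * a"
      using that by (metis mult_sinv_mult mult.assoc)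
  qed
  finally show ?thesis
    by (simp add: lideal_subset_iff_mem)
qed

lemma Lmeet_is_Lclass_iff:
  "Lmeet_is (Lclass (b::'a)) (Lclass c) (Lclass w) \<longleftrightarrow> sinv w * w = sinv b * b * (sinv c * c)"
proof -
  define e where "e = sinv b * b * (sinv c * c)"
  have e_idem: "e * e = e"
    unfolding e_def by (rule idem_mult_idem[OF sinv_mult_idem sinv_mult_idem])
  have e_b: "e * (sinv b * b) = e"
    unfolding e_def idem_commute[OF sinv_mult_idem sinv_mult_idem, of b c] by (simp add: mult.assoc)
  have e_c: "e * (sinv c * c) = e"
    unfolding e_def by (simp add: mult.assoc)
  have lower_bound_iff: "lideal a \<subseteq> lideal b \<and> lideal a \<subseteq> lideal c \<longleftrightarrow> sinv a * a * e = sinv a * a"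
    for a :: 'a
  proof
    assume "lideal a \<subseteq> lideal b \<and> lideal a \<subseteq> lideal c"
    then show "sinv a * a * e = sinv a * a"
      unfolding e_def lideal_subset_iff by (metis mult.assoc)
  next
    assume "sinv a * a * e = sinv a * a"
    then have "sinv a * a * (sinv b * b) = sinv a * a" "sinv a * a * (sinv c * c) = sinv a * a"
      using e_b e_c by (metis mult.assoc)+
    then show "lideal a \<subseteq> lideal b \<and> lideal a \<subseteq> lideal c"
      by (simp add: lideal_subset_iff)
  qed
  have sinv_e: "sinv e * e = e"
    using sinv_idem[OF e_idem] e_idem by simp
  have "Lmeet_is (Lclass b) (Lclass c) (Lclass w) \<longleftrightarrow>
      sinv w * w * e = sinv w * w \<and>
      (\<forall>a. sinv a * a * e = sinv a * a \<longrightarrow> sinv a * a * (sinv w * w) = sinv a * a)"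
    unfolding Lmeet_is_def Lclass_le_Lclass_iff conj_assoc[symmetric] lower_bound_iff
    unfolding lideal_subset_iff ..
  also have "\<dots> \<longleftrightarrow> sinv w * w = e"
  proof
    assume "sinv w * w * e = sinv w * w \<and>
      (\<forall>a. sinv a * a * e = sinv a * a \<longrightarrow> sinv a * a * (sinv w * w) = sinv a * a)"
    then have "sinv w * w * e = sinv w * w" "e * (sinv w * w) = e"
      using sinv_e e_idem by metis+
    then show "sinv w * w = e"
      using idem_commute[OF e_idem sinv_mult_idem, of w] by simp
  qed (simp add: e_idem)
  finally show ?thesis
    unfolding e_def .
qed

lemma mult_sinv_eq_sinv_multD:
  assumes R: "(u::'a) * sinv u = v * sinv v" and eq: "b * sinv c = sinv u * v"
  shows "u * b = v * c" and "v * c * sinv c = v"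
    and "sinv b * (sinv u * u) * b = sinv b * b * (sinv c * c)"
proof -
  have ubc: "u * b * sinv c = v"
    by (simp add: mult.assoc eq R flip: mult.assoc[of u])
  have "c * sinv b = sinv v * u"
    using arg_cong[OF eq, of sinv] by (simp add: sinv_mult_distrib)
  then have "sinv u * u = b * sinv c * (c * sinv b)"
    using eq R by (metis sinv_mult_sinv mult.assoc)
  then have "sinv u * u * b = b * (sinv c * c * (sinv b * b))"
    by (simp add: mult.assoc)
  also have "\<dots> = b * (sinv b * b * (sinv c * c))"
    unfolding idem_commute[OF sinv_mult_idem sinv_mult_idem, of c b] ..
  finally have uub: "sinv u * u * b = b * sinv c * c"
    by (simp add: mult.assoc)
  show "u * b = v * c"
    using ubc by (metis uub mult_sinv_mult mult.assoc)
  show "v * c * sinv c = v"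
    using ubc uub by (metis sinv_mult_sinv mult.assoc)
  show "sinv b * (sinv u * u) * b = sinv b * b * (sinv c * c)"
    using uub by (simp add: mult.assoc)
qed

lemma mult_sinv_eq_sinv_multI:
  assumes "(u::'a) * b = v * c" and "v * c * sinv c = v"
    and meet: "sinv b * (sinv u * u) * b = sinv b * b * (sinv c * c)"
  shows "b * sinv c = sinv u * v"
proof -
  have "b * sinv c = b * (sinv b * b * (sinv c * c)) * sinv c"
    by (simp add: mult.assoc)
  also have "\<dots> = b * sinv b * (sinv u * u) * b * sinv c"
    unfolding meet[symmetric] by (simp add: mult.assoc)
  also have "\<dots> = sinv u * u * b * sinv c"
    unfolding idem_commute[OF mult_sinv_idem sinv_mult_idem, of b u] by (simp add: mult.assoc)
  also have "\<dots> = sinv u * v"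
    using assms(1,2) by (simp add: mult.assoc)
  finally show ?thesis .
qed

end

theorem lemma3p6:
  fixes b c u v :: "'a::semigroup_mult"
  assumes "inverse_semigroup TYPE('a)"
    and "greenR u v"
  shows "b * sinv c = sinv u * v \<longleftrightarrow>
           (u * b = v * c \<and> greenR v (v * c) \<and> Lmeet_is (Lclass b) (Lclass c) (Lclass (u * b)))"
proof -
  note inverse_semigroup = assms(1)
  have R: "u * sinv u = v * sinv v"
    using assms(2) greenR_iff_mult_sinv_eq[OF inverse_semigroup] by simp
  have "greenR v (v * c) \<longleftrightarrow> v * c * sinv c = v"
    by (rule greenR_mult_right_iff[OF inverse_semigroup])
  moreover have "Lmeet_is (Lclass b) (Lclass c) (Lclass (u * b)) \<longleftrightarrow>
      sinv b * (sinv u * u) * b = sinv b * b * (sinv c * c)"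
    by (simp add: Lmeet_is_Lclass_iff[OF inverse_semigroup] sinv_mult_distrib[OF inverse_semigroup]
        mult.assoc)
  ultimately show ?thesis
    using mult_sinv_eq_sinv_multD[OF inverse_semigroup R] mult_sinv_eq_sinv_multI[OF inverse_semigroup]
    by blast
qed

end
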